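(* As an identity of meromorphic functions of $s\in\mathbb{C}$ (the series converging for every $s$ at which its terms are defined), $$\zeta(s)=\frac{1}{\Gamma(s)\,(2^s-1-s)}\sum_{k=1}^\infty\frac{2^{-2k}\,\zeta(s+2k)\,\Gamma(1+s+2k)}{\Gamma(2k+2)} .$$
   Context: $\zeta$ is the Riemann zeta function (meromorphically continued), $\Gamma$ the Gamma function. *)

theory Defs
  imports "HOL-Complex_Analysis.Complex_Analysis"
begin

text \<open>The Riemann zeta function, meromorphically continued: the (unique, by the
identity theorem) function holomorphic on the complex plane minus the point 1 that
agrees with the Dirichlet series sum of n to the power -s for Re s > 1.
Its value at the pole 1 is irrelevant and left unspecified.\<close>
definition riemann_zeta :: "complex \<Rightarrow> complex" where
  "riemann_zeta = (SOME f. f holomorphic_on (UNIV - {1}) \<and>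
      (\<forall>s. 1 < Re s \<longrightarrow> f s = (\<Sum>n. 1 / (of_nat (Suc n)) powr s)))"

end

theory Submission
  imports Defs
begin

text \<open>Put D(s) = (s - 1)(zeta(s) - 1). Expanding (n + 1)^(1-s) binomially around n and
telescoping over n \<ge> 2 gives, for Re s > 2,
  D(s) = 2^(1-s) - sum over i \<ge> 1 of binomial(1-s, i) / (i+1) * D(s+i),
whose right-hand side only needs D one unit further to the right. Iterating this continues D to
an entire function, hence zeta holomorphically to the plane minus 1; as riemann_zeta is defined by
choice, this is also what identifies it with the continued zeta function.

For the identity, let Re s > 1 and subtract the binomial expansions of (n \<plusminus> 1/2)^(-s) around n:
only odd powers of 1/(2n) survive. Multiplied by n and summed over n, the left-hand side
telescopes (Abel summation) to (2^s - 1) zeta(s) - s zeta(s); summing the right-hand side over n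
first gives the series of the theorem, with Gamma(1+s+2k)/Gamma(s) as a Pochhammer symbol. That
series converges locally uniformly off the integers \<le> 1, so the identity continues analytically.\<close>

section \<open>Series and binomial coefficients\<close>

lemma infsum_eq_suminf_of_norm_summable:
  fixes f :: "nat \<Rightarrow> 'a :: banach"
  shows "summable (\<lambda>n. norm (f n)) \<Longrightarrow> (\<Sum>\<^sub>\<infinity>n. f n) = (\<Sum>n. f n)"
  using norm_summable_imp_has_sum summable_norm_cancel summable_sums infsumI by blast

lemma summable_on_product_nonneg:
  fixes u v :: "nat \<Rightarrow> real"
  assumes u: "summable u" and v: "summable v" and u0: "\<And>m. u m \<ge> 0" and v0: "\<And>i. v i \<ge> 0"
  shows "(\<lambda>(m,i). u m * v i) summable_on (UNIV \<times> UNIV)"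
proof -
  have "(\<lambda>(m,i). u m * v i) summable_on Sigma UNIV (\<lambda>_. UNIV)"
  proof (rule summable_on_SigmaI)
    show "((\<lambda>i. (\<lambda>(m, i). u m * v i) (m, i)) has_sum (u m * (\<Sum>i. v i))) UNIV" for m
      using sums_nonneg_imp_has_sum[OF sums_mult[OF summable_sums[OF v], of "u m"]] u0 v0 by simp
    show "(\<lambda>m. u m * (\<Sum>i. v i)) summable_on UNIV"
      by (rule norm_summable_imp_summable_on) (use summable_mult2[OF u] u0 suminf_nonneg[OF v] v0 in auto)
  qed (use u0 v0 in auto)
  thus ?thesis by simp
qed

lemma suminf_swap_of_product_bound:
  fixes a :: "nat \<Rightarrow> nat \<Rightarrow> complex"
  assumes bnd: "\<And>m i. norm (a m i) \<le> u m * v i"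
    and u: "summable u" and v: "summable v" and u0: "\<And>m. u m \<ge> 0" and v0: "\<And>i. v i \<ge> 0"
  shows "summable (\<lambda>m. \<Sum>i. a m i)" "summable (\<lambda>i. \<Sum>m. a m i)"
        "(\<Sum>m. \<Sum>i. a m i) = (\<Sum>i. \<Sum>m. a m i)"
proof -
  have sa: "summable (\<lambda>i. norm (a m i))" for m
    by (rule summable_comparison_test[OF _ summable_mult[OF v, of "u m"]]) (use bnd in auto)
  have sb: "summable (\<lambda>m. norm (a m i))" for i
    by (rule summable_comparison_test[OF _ summable_mult2[OF u, of "v i"]]) (use bnd in auto)
  have na: "norm (\<Sum>i. a m i) \<le> u m * (\<Sum>i. v i)" for m
  proof -
    have "norm (\<Sum>i. a m i) \<le> (\<Sum>i. norm (a m i))" by (rule summable_norm[OF sa])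
    also have "\<dots> \<le> (\<Sum>i. u m * v i)" by (rule suminf_le) (use bnd sa summable_mult[OF v] in auto)
    also have "\<dots> = u m * (\<Sum>i. v i)" by (rule suminf_mult[OF v])
    finally show ?thesis .
  qed
  have nb: "norm (\<Sum>m. a m i) \<le> (\<Sum>m. u m) * v i" for i
  proof -
    have "norm (\<Sum>m. a m i) \<le> (\<Sum>m. norm (a m i))" by (rule summable_norm[OF sb])
    also have "\<dots> \<le> (\<Sum>m. u m * v i)" by (rule suminf_le) (use bnd sb summable_mult2[OF u] in auto)
    also have "\<dots> = (\<Sum>m. u m) * v i" by (rule suminf_mult2[OF u, symmetric])
    finally show ?thesis .
  qed
  have n1: "summable (\<lambda>m. norm (\<Sum>i. a m i))"
    by (rule summable_comparison_test[OF _ summable_mult2[OF u]]) (use na in auto)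
  have n2: "summable (\<lambda>i. norm (\<Sum>m. a m i))"
    by (rule summable_comparison_test[OF _ summable_mult[OF v]]) (use nb in auto)
  show s1: "summable (\<lambda>m. \<Sum>i. a m i)" by (rule summable_norm_cancel[OF n1])
  show s2: "summable (\<lambda>i. \<Sum>m. a m i)" by (rule summable_norm_cancel[OF n2])
  have prod: "(\<lambda>(m,i). u m * v i) summable_on (UNIV \<times> UNIV)"
    by (rule summable_on_product_nonneg[OF u v u0 v0])
  have "(\<lambda>x. norm ((\<lambda>(m,i). a m i) x)) summable_on (UNIV \<times> UNIV)"
    by (rule summable_on_comparison_test[OF prod]) (use bnd in auto)
  hence sumab: "(\<lambda>(m,i). a m i) summable_on (UNIV \<times> UNIV)"
    using summable_on_iff_abs_summable_on_complex by blast
  have "(\<Sum>\<^sub>\<infinity>m. \<Sum>\<^sub>\<infinity>i. a m i) = (\<Sum>\<^sub>\<infinity>i. \<Sum>\<^sub>\<infinity>m. a m i)"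
    by (rule infsum_swap_banach[OF sumab])
  thus "(\<Sum>m. \<Sum>i. a m i) = (\<Sum>i. \<Sum>m. a m i)"
    by (simp add: infsum_eq_suminf_of_norm_summable sa sb n1 n2)
qed

lemma summable_strict_mono_reindex_nonneg:
  fixes f :: "nat \<Rightarrow> real"
  assumes f: "summable f" and f0: "\<And>n. 0 \<le> f n" and g: "strict_mono g"
  shows "summable (\<lambda>n. f (g n))"
proof (rule summableI_nonneg_bounded)
  show "0 \<le> f (g n)" for n by (rule f0)
  fix n
  have "(\<Sum>k<n. f (g k)) = sum f (g ` {..<n})"
    by (subst sum.reindex) (use strict_mono_imp_inj_on[OF g] in \<open>auto simp: inj_on_def\<close>)
  also have "\<dots> \<le> sum f {..<g n}"
    by (rule sum_mono2) (use g f0 in \<open>auto simp: strict_mono_def\<close>)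
  also have "\<dots> \<le> suminf f" by (rule sum_le_suminf[OF f]) (use f0 in auto)
  finally show "(\<Sum>k<n. f (g k)) \<le> suminf f" .
qed

lemma summable_Suc_powr: "a < -1 \<Longrightarrow> summable (\<lambda>n. real (Suc n) powr a)"
  using summable_real_powr_iff[of a] summable_Suc_iff[of "\<lambda>n. real n powr a"] by simp

lemma pochhammer_nonneg_of_nonneg: "0 \<le> (r::real) \<Longrightarrow> 0 \<le> pochhammer r n"
  by (induction n) (auto simp: pochhammer_Suc)

lemma norm_pochhammer_le: "norm (pochhammer (a::complex) n) \<le> pochhammer (norm a) n"
proof (induction n)
  case (Suc n)
  have "norm (pochhammer a (Suc n)) = norm (pochhammer a n) * norm (a + of_nat n)"
    by (simp add: pochhammer_Suc norm_mult)
  also have "\<dots> \<le> pochhammer (norm a) n * (norm a + of_nat n)"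
    using norm_triangle_ineq[of a "of_nat n"]
    by (intro mult_mono Suc.IH pochhammer_nonneg_of_nonneg) auto
  finally show ?case by (simp add: pochhammer_Suc)
qed simp

lemma pochhammer_mono: "0 \<le> r \<Longrightarrow> r \<le> (t::real) \<Longrightarrow> pochhammer r n \<le> pochhammer t n"
proof (induction n)
  case (Suc n)
  have "pochhammer r n * (r + of_nat n) \<le> pochhammer t n * (t + of_nat n)"
    by (rule mult_mono) (use Suc pochhammer_nonneg_of_nonneg[of t n] in auto)
  thus ?case by (simp add: pochhammer_Suc)
qed simp

lemma norm_pochhammer_div_fact_le:
  "0 \<le> R \<Longrightarrow> norm (a::complex) \<le> R \<Longrightarrow> norm (pochhammer a n / fact n) \<le> pochhammer R n / fact n"
  using norm_pochhammer_le[of a n] pochhammer_mono[of "norm a" R n]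
  by (simp add: norm_divide divide_right_mono)

lemma norm_gbinomial_le: "norm ((a::complex) gchoose n) \<le> pochhammer (norm a) n / fact n"
  using norm_pochhammer_div_fact_le[of "norm a" "-a" n]
  by (simp add: gbinomial_pochhammer norm_mult norm_divide norm_power)

lemma gbinomial_uminus: "((-s::complex) gchoose j) = (-1)^j * pochhammer s j / fact j"
  by (simp add: gbinomial_pochhammer)

lemma pochhammer_series_sums:
  assumes "0 \<le> x" "x < (1::real)"
  shows "(\<lambda>n. pochhammer r n / fact n * x^n) sums (1 - x) powr (-r)"
proof -
  have "(\<lambda>n. ((-r) gchoose n) * (-x)^n) sums (1 + (-x)) powr (-r)"
    by (rule gen_binomial_real) (use assms in auto)
  moreover have "((-r) gchoose n) * (-x)^n = pochhammer r n / fact n * x^n" for n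
  proof -
    have "((-r) gchoose n) * (-x)^n = ((-1)^n * (-1)^n) * (pochhammer r n / fact n * x^n)"
      by (simp add: gbinomial_pochhammer power_minus[of x n])
    also have "(-1::real)^n * (-1)^n = 1" by (simp flip: power_add)
    finally show ?thesis by simp
  qed
  ultimately show ?thesis by simp
qed

lemma summable_pochhammer_series:
  assumes "0 \<le> x" "x < (1::real)"
  shows "summable (\<lambda>n. pochhammer r n / fact n * x^n)"
  using pochhammer_series_sums[OF assms] by (rule sums_summable)

lemma summable_pochhammer_odd_series:
  assumes R: "0 \<le> R"
  shows "summable (\<lambda>k. (1/4::real)^(Suc k) * (pochhammer R (2*k+3) / fact (2*k+3)))"
proof -
  define F where "F j = pochhammer R j / fact j * (1/2::real)^j" for j
  have F: "summable F" unfolding F_def by (rule summable_pochhammer_series) auto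
  have F0: "0 \<le> F j" for j
    unfolding F_def using R by (intro mult_nonneg_nonneg divide_nonneg_pos pochhammer_nonneg_of_nonneg) auto
  have "summable (\<lambda>k. 2 * F (2*k+3))"
    by (intro summable_mult summable_strict_mono_reindex_nonneg[OF F F0]) (rule strict_monoI, simp)
  moreover have "(1/4::real)^(Suc k) * (pochhammer R (2*k+3) / fact (2*k+3)) = 2 * F (2*k+3)" for k
  proof -
    have "(1/2::real)^(2*k+3) = (1/2) * ((1/2)^2)^(Suc k)"
      by (simp only: power_mult[symmetric]) (simp add: numeral_3_eq_3 mult.commute)
    also have "(1/2::real)^2 = 1/4" by (simp add: power2_eq_square)
    finally show ?thesis unfolding F_def by (simp only: mult_ac)
  qed
  ultimately show ?thesis by simp
qed

lemma powr_of_nat_Suc: "(of_nat (Suc n) :: complex) powr (of_nat k) = of_nat (Suc n) ^ k"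
  by (rule powr_nat') (simp del: of_nat_Suc)

lemma two_powr_minus_of_nat: "(2::real) powr (- real n) = (1/2) ^ n"
proof -
  have "(2::real) powr real n = 2 ^ n" by (rule powr_realpow) simp
  thus ?thesis by (simp only: powr_minus_divide power_one_over)
qed

lemma two_powr_minus_even: "(2::complex) powr (- 2 * of_nat (Suc k)) = (1/4) ^ Suc k"
proof -
  have "(- 2 * of_nat (Suc k) :: complex) = - of_nat (2 * Suc k)" by simp
  hence "(2::complex) powr (- 2 * of_nat (Suc k)) = inverse (2 powr of_nat (2 * Suc k))"
    by (simp only: powr_minus)
  also have "(2::complex) powr of_nat (2 * Suc k) = 2 ^ (2 * Suc k)" by (rule powr_nat') simp
  also have "(2::complex) ^ (2 * Suc k) = 4 ^ Suc k" by (simp only: power_mult) simp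
  finally show ?thesis by (simp add: power_one_over inverse_eq_divide)
qed

section \<open>The Dirichlet series of zeta\<close>

definition zeta_series :: "complex \<Rightarrow> complex" where
  "zeta_series s = (\<Sum>n. 1 / (of_nat (Suc n)) powr s)"

lemma norm_zeta_series_term: "norm (1 / (of_nat (Suc n) :: complex) powr s) = real (Suc n) powr (- Re s)"
proof -
  have "norm ((of_nat (Suc n) :: complex) powr s) = real (Suc n) powr Re s"
    by (subst norm_powr_real_powr) auto
  thus ?thesis by (simp add: norm_divide powr_minus_divide)
qed

lemma zeta_series_sums: "1 < Re s \<Longrightarrow> (\<lambda>n. 1 / (of_nat (Suc n) :: complex) powr s) sums zeta_series s"
proof -
  assume s: "1 < Re s"
  have "summable (\<lambda>n. norm (1 / (of_nat (Suc n) :: complex) powr s))"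
    unfolding norm_zeta_series_term by (rule summable_Suc_powr) (use s in simp)
  from summable_sums[OF summable_norm_cancel[OF this]] show ?thesis by (simp add: zeta_series_def)
qed

lemma zeta_series_sums': "1 < Re s \<Longrightarrow> (\<lambda>n. (of_nat (Suc n) :: complex) powr (-s)) sums zeta_series s"
  using zeta_series_sums[of s] by (simp add: powr_minus divide_inverse)

lemma zeta_series_minus_one_sums:
  "1 < Re s \<Longrightarrow> (\<lambda>n. 1 / (of_nat (Suc (Suc n)) :: complex) powr s) sums (zeta_series s - 1)"
  using sums_Suc_iff[of "\<lambda>n. 1 / (of_nat (Suc n) :: complex) powr s"] zeta_series_sums[of s] by simp

lemma holomorphic_zeta_series: "zeta_series holomorphic_on {s. 1 < Re s}"
  unfolding zeta_series_def
proof (rule holomorphic_uniform_sequence[OF open_halfspace_Re_gt,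
      where f = "\<lambda>N s. \<Sum>n<N. 1 / (of_nat (Suc n)) powr s"])
  show "(\<lambda>s. \<Sum>n<N. 1 / (of_nat (Suc n)) powr s) holomorphic_on {s. 1 < Re s}" for N
    by (intro holomorphic_intros) auto
  fix z :: complex assume z: "z \<in> {s. 1 < Re s}"
  define d where "d = (Re z - 1) / 2"
  have Re_ge: "Re z - d \<le> Re s" if "s \<in> cball z d" for s
    using that abs_Re_le_cmod[of "z - s"] by (simp add: dist_norm abs_le_iff)
  have "uniform_limit (cball z d) (\<lambda>N s. \<Sum>n<N. 1 / (of_nat (Suc n)) powr s)
          (\<lambda>s. \<Sum>n. 1 / (of_nat (Suc n)) powr s) sequentially"
  proof (rule Weierstrass_m_test)
    show "summable (\<lambda>n. real (Suc n) powr (- (Re z - d)))"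
      by (rule summable_Suc_powr) (use z in \<open>simp add: d_def field_simps\<close>)
    show "norm (1 / (of_nat (Suc n) :: complex) powr s) \<le> real (Suc n) powr (- (Re z - d))"
      if "s \<in> cball z d" for n s
      unfolding norm_zeta_series_term using Re_ge[OF that] by (intro powr_mono) auto
  qed
  moreover have "cball z d \<subseteq> {s. 1 < Re s}"
  proof
    fix s assume "s \<in> cball z d"
    with Re_ge z show "s \<in> {s. 1 < Re s}" by (force simp: d_def field_simps)
  qed
  moreover have "0 < d" using z by (simp add: d_def)
  ultimately show "\<exists>d>0. cball z d \<subseteq> {s. 1 < Re s} \<and>
          uniform_limit (cball z d) (\<lambda>N s. \<Sum>n<N. 1 / (of_nat (Suc n)) powr s)
            (\<lambda>s. \<Sum>n. 1 / (of_nat (Suc n)) powr s) sequentially"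
    by blast
qed

definition zeta_tail_const :: real where "zeta_tail_const = 4 * (\<Sum>n. real (Suc n) powr (-2))"

lemma zeta_tail_const_nonneg: "0 \<le> zeta_tail_const"
  unfolding zeta_tail_const_def
  using suminf_nonneg[OF summable_Suc_powr[of "-2"]] by simp

text \<open>For Re s \<ge> 2, (n+2)^(-s) = 2^(-s) ((n+2)/2)^(-s) \<le> 2^(-Re s) * 4/(n+1)^2.\<close>

lemma norm_zeta_series_minus_one_le:
  assumes "2 \<le> Re s"
  shows "norm (zeta_series s - 1) \<le> zeta_tail_const * 2 powr (- Re s)"
proof -
  define t where "t n = 1 / (of_nat (Suc (Suc n)) :: complex) powr s" for n
  have sums: "t sums (zeta_series s - 1)"
    unfolding t_def by (rule zeta_series_minus_one_sums) (use assms in simp)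
  have bound: "norm (t n) \<le> 2 powr (- Re s) * (4 * real (Suc n) powr (-2))" for n
  proof -
    have "2 * (real (Suc (Suc n)) / 2) = real (Suc (Suc n))" by simp
    hence "norm (t n) = (2 * (real (Suc (Suc n)) / 2)) powr (- Re s)"
      unfolding t_def norm_zeta_series_term by (simp only:)
    also have "\<dots> = 2 powr (- Re s) * (real (Suc (Suc n)) / 2) powr (- Re s)"
      by (intro powr_mult; simp)
    also have "(real (Suc (Suc n)) / 2) powr (- Re s) \<le> (real (Suc (Suc n)) / 2) powr (-2)"
      by (rule powr_mono) (use assms in auto)
    also have "(real (Suc (Suc n)) / 2) powr (-2) = 4 * real (Suc (Suc n)) powr (-2)"
      by (simp add: powr_divide powr_minus_divide)
    also have "\<dots> \<le> 4 * real (Suc n) powr (-2)"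
      by (simp add: powr_mono2')
    finally show ?thesis by (simp add: mult_left_mono)
  qed
  have summable_bound: "summable (\<lambda>n. 2 powr (- Re s) * (4 * real (Suc n) powr (-2)))"
    by (intro summable_mult summable_Suc_powr) auto
  have "summable (\<lambda>n. norm (t n))"
    by (rule summable_comparison_test[OF _ summable_bound]) (use bound in auto)
  hence "norm (zeta_series s - 1) \<le> (\<Sum>n. norm (t n))"
    using summable_norm[of t] sums by (simp add: sums_iff)
  also have "\<dots> \<le> (\<Sum>n. 2 powr (- Re s) * (4 * real (Suc n) powr (-2)))"
    by (rule suminf_le[OF bound \<open>summable (\<lambda>n. norm (t n))\<close> summable_bound])
  also have "\<dots> = 2 powr (- Re s) * zeta_tail_const"
    unfolding zeta_tail_const_def
    using suminf_mult[OF summable_mult[OF summable_Suc_powr[of "-2"]], of "2 powr (- Re s)" 4]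
          suminf_mult[OF summable_Suc_powr[of "-2"], of 4]
    by simp
  finally show ?thesis by (simp add: mult.commute)
qed

section \<open>Holomorphic continuation of zeta\<close>

lemma holomorphic_suminf_locally_dominated:
  fixes f :: "nat \<Rightarrow> complex \<Rightarrow> complex"
  assumes A: "open A" and hol: "\<And>k. f k holomorphic_on A"
    and dom: "\<And>z. z \<in> A \<Longrightarrow> \<exists>d>0. cball z d \<subseteq> A \<and>
               (\<exists>M. summable M \<and> (\<forall>\<^sub>F k in sequentially. \<forall>s\<in>cball z d. norm (f k s) \<le> M k))"
  shows "(\<lambda>s. \<Sum>k. f k s) holomorphic_on A" and "\<And>z. z \<in> A \<Longrightarrow> summable (\<lambda>k. f k z)"
proof -
  have loc: "\<exists>d>0. cball z d \<subseteq> A \<and> summable (\<lambda>k. f k z) \<and>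
      uniform_limit (cball z d) (\<lambda>N s. \<Sum>k<N. f k s) (\<lambda>s. \<Sum>k. f k s) sequentially"
    if z: "z \<in> A" for z
  proof -
    obtain d M where d: "d > 0" "cball z d \<subseteq> A" and M: "summable M"
      and ev: "\<forall>\<^sub>F k in sequentially. \<forall>s\<in>cball z d. norm (f k s) \<le> M k"
      using dom[OF z] by blast
    have "\<forall>\<^sub>F k in sequentially. norm (f k z) \<le> M k"
      using ev by eventually_elim (use d in auto)
    hence "summable (\<lambda>k. f k z)" by (rule summable_comparison_test_ev[OF _ M])
    with Weierstrass_m_test_ev[OF ev M] d show ?thesis by blast
  qed
  show "(\<lambda>s. \<Sum>k. f k s) holomorphic_on A"
  proof (rule holomorphic_uniform_sequence[OF A, where f = "\<lambda>N s. \<Sum>k<N. f k s"])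
    show "(\<lambda>s. \<Sum>k<N. f k s) holomorphic_on A" for N by (intro holomorphic_intros hol)
  qed (use loc in blast)
  show "summable (\<lambda>k. f k z)" if "z \<in> A" for z using loc[OF that] by blast
qed

lemma cball_Re_norm_bounds:
  "s \<in> cball z d \<Longrightarrow> Re z - d \<le> Re s \<and> norm s \<le> norm z + d"
proof -
  assume "s \<in> cball z d"
  hence n: "norm (z - s) \<le> d" by (simp add: dist_norm)
  have "\<bar>Re z - Re s\<bar> \<le> d" using abs_Re_le_cmod[of "z - s"] n by simp
  moreover have "norm s \<le> norm z + d" using norm_triangle_ineq2[of s z] n by (simp add: norm_minus_commute)
  ultimately show ?thesis by (simp add: abs_le_iff)
qed

definition zeta_regular :: "complex \<Rightarrow> complex" where
  "zeta_regular s = (s - 1) * (zeta_series s - 1)"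

definition continuation_step :: "(complex \<Rightarrow> complex) \<Rightarrow> complex \<Rightarrow> complex" where
  "continuation_step g s = 2 powr (1 - s) -
     (\<Sum>i. ((1 - s) gchoose Suc i) / of_nat (Suc (Suc i)) * g (s + of_nat (Suc i)))"

definition halfplane :: "nat \<Rightarrow> complex set" where "halfplane m = {s. 1 - real m < Re s}"

lemma open_halfplane: "open (halfplane m)"
  unfolding halfplane_def by (rule open_halfspace_Re_gt)

lemma connected_halfplane: "connected (halfplane m)"
  unfolding halfplane_def by (rule convex_connected, rule convex_halfspace_Re_gt)

lemma halfplane_mono: "m \<le> m' \<Longrightarrow> halfplane m \<subseteq> halfplane m'"
  by (auto simp: halfplane_def)

lemma holomorphic_zeta_regular: "zeta_regular holomorphic_on halfplane 0"
  unfolding halfplane_def zeta_regular_def[abs_def] of_nat_0 diff_zero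
  by (intro holomorphic_intros holomorphic_zeta_series)

lemma norm_zeta_regular_le:
  "2 \<le> Re s \<Longrightarrow> norm (zeta_regular s) \<le> norm (s - 1) * (zeta_tail_const * 2 powr (- Re s))"
  unfolding zeta_regular_def norm_mult
  by (intro mult_left_mono norm_zeta_series_minus_one_le) auto

lemma holomorphic_gbinomial_one_minus: "(\<lambda>s. ((1 - s) gchoose n)) holomorphic_on A"
proof -
  have "(\<lambda>s. (1 - s) gchoose n) = (\<lambda>s::complex. (-1)^n * pochhammer (s - 1) n / fact n)"
    by (simp add: gbinomial_pochhammer fun_eq_iff)
  thus ?thesis by (simp only:) (intro holomorphic_intros, auto)
qed

lemma norm_continuation_term_le:
  fixes s :: complex and R r :: real
  assumes "2 \<le> Re s + real (Suc i)" "norm (1 - s) \<le> R" "norm s \<le> R" "1 \<le> R" "r \<le> Re s"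
  shows "norm (((1 - s) gchoose Suc i) / of_nat (Suc (Suc i)) * zeta_regular (s + of_nat (Suc i)))
         \<le> R * (zeta_tail_const * (2 powr (-r) * (1/2)^(Suc i))) * (pochhammer R (Suc i) / fact (Suc i))"
proof -
  define A where "A = pochhammer R (Suc i) / fact (Suc i)"
  define K where "K = zeta_tail_const * (2 powr (-r) * (1/2)^(Suc i))"
  have A0: "0 \<le> A" unfolding A_def using pochhammer_nonneg_of_nonneg[of R] assms by auto
  have K0: "0 \<le> K" unfolding K_def using zeta_tail_const_nonneg by auto
  have G: "norm ((1 - s) gchoose Suc i) \<le> A"
  proof -
    have "norm ((1 - s) gchoose Suc i) \<le> pochhammer (norm (1 - s)) (Suc i) / fact (Suc i)"
      by (rule norm_gbinomial_le)
    also have "\<dots> \<le> A" unfolding A_def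
      by (intro divide_right_mono pochhammer_mono assms) auto
    finally show ?thesis .
  qed
  have p: "2 powr (- Re (s + of_nat (Suc i))) \<le> 2 powr (-r) * (1/2)^(Suc i)"
  proof -
    have "2 powr (- Re (s + of_nat (Suc i))) = 2 powr (- Re s) * 2 powr (- real (Suc i))"
      by (simp add: powr_add[symmetric])
    also have "2 powr (- real (Suc i)) = (1/2::real)^(Suc i)"
      by (rule two_powr_minus_of_nat)
    also have "2 powr (- Re s) \<le> 2 powr (-r)" using assms by simp
    finally show ?thesis by (simp add: mult_right_mono)
  qed
  have W: "norm (zeta_regular (s + of_nat (Suc i))) \<le> (R + real i) * K"
  proof -
    have "norm (zeta_regular (s + of_nat (Suc i)))
        \<le> norm (s + of_nat (Suc i) - 1) * (zeta_tail_const * 2 powr (- Re (s + of_nat (Suc i))))"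
      by (rule norm_zeta_regular_le) (use assms(1) in simp)
    also have "\<dots> \<le> (R + real i) * K"
    proof (rule mult_mono)
      show "norm (s + of_nat (Suc i) - 1) \<le> R + real i"
        using norm_triangle_ineq[of s "of_nat i"] assms by simp
      show "zeta_tail_const * 2 powr (- Re (s + of_nat (Suc i))) \<le> K"
        unfolding K_def by (intro mult_left_mono p zeta_tail_const_nonneg)
    qed (use K0 assms(4) zeta_tail_const_nonneg in auto)
    finally show ?thesis .
  qed
  have RK: "(R + real i) / real (Suc (Suc i)) \<le> R"
  proof -
    have "real i \<le> R * real i" using assms(4) by (simp add: mult_right_mono[of 1 R "real i", simplified])
    thus ?thesis using assms(4) by (simp add: field_simps)
  qed
  have "norm (((1 - s) gchoose Suc i) / of_nat (Suc (Suc i)) * zeta_regular (s + of_nat (Suc i)))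
        = norm ((1 - s) gchoose Suc i) * (norm (zeta_regular (s + of_nat (Suc i))) / real (Suc (Suc i)))"
    by (simp add: norm_mult norm_divide del: of_nat_Suc)
  also have "\<dots> \<le> A * ((R + real i) * K / real (Suc (Suc i)))"
    by (intro mult_mono G divide_right_mono W A0) auto
  also have "(R + real i) * K / real (Suc (Suc i)) = (R + real i) / real (Suc (Suc i)) * K" by simp
  also have "A * \<dots> \<le> A * (R * K)"
    by (intro mult_left_mono mult_right_mono RK K0 A0)
  finally show ?thesis unfolding A_def K_def by (simp add: mult_ac)
qed

lemma holomorphic_continuation_step:
  assumes g: "g holomorphic_on halfplane m" and g_eq: "\<And>w. 2 \<le> Re w \<Longrightarrow> g w = zeta_regular w"
  shows "continuation_step g holomorphic_on halfplane (Suc m)"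
proof -
  define T where "T i s = ((1 - s) gchoose Suc i) / of_nat (Suc (Suc i)) * g (s + of_nat (Suc i))" for i s
  have T: "T i holomorphic_on halfplane (Suc m)" for i
  proof -
    have "(g \<circ> (\<lambda>s. s + of_nat (Suc i))) holomorphic_on halfplane (Suc m)"
      by (rule holomorphic_on_compose_gen[OF _ g]) (auto intro!: holomorphic_intros simp: halfplane_def)
    thus ?thesis unfolding T_def[abs_def] o_def by (intro holomorphic_intros holomorphic_gbinomial_one_minus) auto
  qed
  have "(\<lambda>s. \<Sum>i. T i s) holomorphic_on halfplane (Suc m)"
  proof (rule holomorphic_suminf_locally_dominated(1)[OF open_halfplane T])
    fix z assume z: "z \<in> halfplane (Suc m)"
    define d where "d = (Re z - (1 - real (Suc m))) / 2"
    define R where "R = norm z + d + 1"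
    define r where "r = Re z - d"
    define M where "M i = R * (zeta_tail_const * (2 powr (-r) * (1/2)^(Suc i))) * (pochhammer R (Suc i) / fact (Suc i))" for i
    have d: "0 < d" using z by (simp add: d_def halfplane_def)
    have sub: "cball z d \<subseteq> halfplane (Suc m)"
    proof
      fix s assume "s \<in> cball z d"
      thus "s \<in> halfplane (Suc m)"
        using cball_Re_norm_bounds[of s z d] z unfolding d_def halfplane_def by (auto simp: field_simps)
    qed
    have "summable (\<lambda>i. pochhammer R (Suc i) / fact (Suc i) * (1/2)^(Suc i))"
      by (rule summable_Suc_iff[where f="\<lambda>i. pochhammer R i / fact i * (1/2)^i", THEN iffD2])
         (rule summable_pochhammer_series, auto)
    from summable_mult[OF this, of "R * zeta_tail_const * 2 powr (-r)"]
    have M: "summable M" unfolding M_def by (simp only: mult_ac)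
    have "\<forall>\<^sub>F i in sequentially. \<forall>s\<in>cball z d. norm (T i s) \<le> M i"
      unfolding eventually_sequentially
    proof (intro exI allI impI ballI)
      fix i s assume i: "nat \<lceil>2 - r\<rceil> \<le> i" and s: "s \<in> cball z d"
      from cball_Re_norm_bounds[OF s] have rs: "r \<le> Re s" and ns: "norm s \<le> norm z + d"
        by (auto simp: r_def)
      have w2: "2 \<le> Re s + real (Suc i)" using i rs by linarith
      have "T i s = ((1 - s) gchoose Suc i) / of_nat (Suc (Suc i)) * zeta_regular (s + of_nat (Suc i))"
        unfolding T_def using g_eq[of "s + of_nat (Suc i)"] w2 by simp
      also have "norm \<dots> \<le> M i" unfolding M_def
        by (rule norm_continuation_term_le[OF w2 _ _ _ rs])
           (use ns norm_triangle_ineq4[of 1 s] d in \<open>auto simp: R_def\<close>)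
      finally show "norm (T i s) \<le> M i" .
    qed
    with d sub M show "\<exists>d>0. cball z d \<subseteq> halfplane (Suc m) \<and>
        (\<exists>M. summable M \<and> (\<forall>\<^sub>F i in sequentially. \<forall>s\<in>cball z d. norm (T i s) \<le> M i))"
      by blast
  qed
  moreover have "continuation_step g = (\<lambda>s. 2 powr (1 - s) - (\<Sum>i. T i s))"
    by (simp add: fun_eq_iff continuation_step_def T_def)
  ultimately show ?thesis by (auto intro!: holomorphic_intros)
qed

lemma binomial_difference_sums:
  fixes a :: complex
  shows "(\<lambda>i. (a gchoose Suc i) * of_nat (Suc (Suc n)) powr (a - of_nat (Suc i))) sums
           (of_nat (Suc (Suc (Suc n))) powr a - of_nat (Suc (Suc n)) powr a)"
proof -
  have "\<bar>1::real\<bar> < \<bar>real (Suc (Suc n))\<bar>" by simp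
  from gen_binomial_complex''[OF this, of a]
  have "(\<lambda>i. (a gchoose i) * of_nat (Suc (Suc n)) powr (a - of_nat i)) sums (of_nat (Suc (Suc (Suc n))) powr a)"
    by (simp add: add.commute)
  thus ?thesis by (subst sums_Suc_iff) simp
qed

lemma norm_binomial_difference_term_le:
  fixes a :: complex
  shows "norm ((a gchoose Suc i) * (of_nat (Suc (Suc n)) :: complex) powr (a - of_nat (Suc i)))
         \<le> real (Suc (Suc n)) powr Re a * (pochhammer (norm a) (Suc i) / fact (Suc i) * (1/2)^Suc i)"
proof -
  have "norm ((of_nat (Suc (Suc n)) :: complex) powr (a - of_nat (Suc i)))
      = real (Suc (Suc n)) powr (Re a - real (Suc i))"
    by (subst norm_powr_real_powr) auto
  also have "\<dots> = real (Suc (Suc n)) powr (Re a) * real (Suc (Suc n)) powr (- real (Suc i))"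
    by (subst powr_add[symmetric]) (simp add: algebra_simps)
  also have "real (Suc (Suc n)) powr (- real (Suc i)) \<le> 2 powr (- real (Suc i))"
    by (rule powr_mono2') auto
  also have "(2::real) powr (- real (Suc i)) = (1/2) ^ Suc i"
    by (rule two_powr_minus_of_nat)
  finally have "norm ((of_nat (Suc (Suc n)) :: complex) powr (a - of_nat (Suc i)))
      \<le> real (Suc (Suc n)) powr (Re a) * (1/2) ^ Suc i"
    by (simp add: mult_left_mono)
  moreover have "0 \<le> pochhammer (norm a) (Suc i) / fact (Suc i)"
    by (intro divide_nonneg_pos pochhammer_nonneg_of_nonneg) auto
  ultimately have "norm (a gchoose Suc i) * norm ((of_nat (Suc (Suc n)) :: complex) powr (a - of_nat (Suc i)))
      \<le> pochhammer (norm a) (Suc i) / fact (Suc i) * (real (Suc (Suc n)) powr (Re a) * (1/2) ^ Suc i)"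
    by (intro mult_mono norm_gbinomial_le) auto
  thus ?thesis by (simp add: norm_mult mult_ac)
qed

lemma gbinomial_Suc_Suc_zeta_series:
  fixes s :: complex
  shows "((1 - s) gchoose Suc (Suc j)) * (zeta_series (s + of_nat (Suc j)) - 1)
         = - (((1 - s) gchoose Suc j) / of_nat (Suc (Suc j)) * zeta_regular (s + of_nat (Suc j)))"
proof -
  have "of_nat (Suc (Suc j)) * ((1 - s) gchoose Suc (Suc j))
      = ((1 - s) gchoose Suc j) * (1 - s) - of_nat (Suc j) * ((1 - s) gchoose Suc j)"
    unfolding gbinomial_mult_1'[of "1 - s" "Suc j"] by simp
  hence "of_nat (Suc (Suc j)) * ((1 - s) gchoose Suc (Suc j))
      = - (((1 - s) gchoose Suc j) * (s + of_nat (Suc j) - 1))"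
    by (simp add: algebra_simps)
  hence "((1 - s) gchoose Suc (Suc j))
      = - (((1 - s) gchoose Suc j) * (s + of_nat (Suc j) - 1) / of_nat (Suc (Suc j)))"
    by (simp add: field_simps del: of_nat_Suc)
  thus ?thesis unfolding zeta_regular_def by (simp only:) (simp add: divide_inverse algebra_simps)
qed

text \<open>With a = 1 - s, sum (n+3)^a - (n+2)^a over n once directly (it telescopes to -2^a) and
once after binomial expansion around n + 2 and interchange of the two summations.\<close>

lemma continuation_step_zeta_regular:
  assumes s: "2 < Re s"
  shows "continuation_step zeta_regular s = zeta_regular s"
proof -
  define a where "a = 1 - s"
  have Ra: "Re a < -1" using s by (simp add: a_def)
  define b where "b n i = (a gchoose Suc i) * (of_nat (Suc (Suc n)) :: complex) powr (a - of_nat (Suc i))" for n i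
  define u where "u n = real (Suc (Suc n)) powr (Re a)" for n
  define v where "v i = pochhammer (norm a) (Suc i) / fact (Suc i) * (1/2::real)^(Suc i)" for i
  have u: "summable u"
    unfolding u_def using summable_Suc_powr[OF Ra] by (subst summable_Suc_iff)
  have v: "summable v" unfolding v_def
    by (rule summable_Suc_iff[where f="\<lambda>i. pochhammer (norm a) i / fact i * (1/2)^i", THEN iffD2])
       (rule summable_pochhammer_series, auto)
  have u0: "u n \<ge> 0" for n by (simp add: u_def)
  have v0: "v i \<ge> 0" for i unfolding v_def
    by (intro mult_nonneg_nonneg divide_nonneg_pos pochhammer_nonneg_of_nonneg) auto
  have bnd: "norm (b n i) \<le> u n * v i" for n i
    unfolding b_def u_def v_def by (rule norm_binomial_difference_term_le)
  note swap = suminf_swap_of_product_bound[of b u v, OF bnd u v u0 v0]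
  have "(\<lambda>n. (of_nat (Suc (Suc n)) :: complex) powr a) \<longlonglongrightarrow> 0"
    by (rule tendsto_neg_powr_complex_of_nat) (use Ra in \<open>auto intro: filterlim_subseq strict_monoI\<close>)
  from telescope_sums[OF this]
  have "(\<lambda>n. \<Sum>i. b n i) sums (- (2 powr a))"
    using binomial_difference_sums[of a] unfolding b_def by (simp add: sums_iff)
  hence rows: "(\<Sum>n. \<Sum>i. b n i) = - (2 powr a)" by (simp add: sums_iff)
  define c where "c i = (a gchoose Suc i) * (zeta_series (s + of_nat i) - 1)" for i
  have col: "(\<lambda>n. b n i) sums c i" for i
  proof -
    have "1 < Re (s + of_nat i)" using s by simp
    moreover have "(of_nat (Suc (Suc n)) :: complex) powr (a - of_nat (Suc i))
        = 1 / of_nat (Suc (Suc n)) powr (s + of_nat i)" for n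
    proof -
      have exponent: "a - of_nat (Suc i) = - (s + of_nat i)" by (simp add: a_def)
      show ?thesis unfolding exponent powr_minus by (simp add: divide_inverse)
    qed
    ultimately show ?thesis
      using sums_mult[OF zeta_series_minus_one_sums, of "s + of_nat i" "a gchoose Suc i"]
      unfolding b_def c_def by simp
  qed
  hence cols: "(\<Sum>i. \<Sum>n. b n i) = (\<Sum>i. c i)" and "summable c"
    using swap(2) by (simp_all add: sums_iff)
  define T where "T j = ((1 - s) gchoose Suc j) / of_nat (Suc (Suc j)) * zeta_regular (s + of_nat (Suc j))" for j
  have c0: "c 0 = - zeta_regular s" by (simp add: c_def zeta_regular_def a_def algebra_simps)
  have cSuc: "c (Suc j) = - T j" for j
    unfolding c_def a_def T_def by (rule gbinomial_Suc_Suc_zeta_series)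
  have "(\<lambda>j. - T j) sums ((\<Sum>i. c i) - c 0)"
    using \<open>summable c\<close> sums_Suc_iff[of c] by (simp add: cSuc[symmetric] sums_iff)
  from sums_minus[OF this] have "(\<Sum>i. c i) = - zeta_regular s - (\<Sum>j. T j)"
    by (simp add: c0 sums_iff)
  with swap(3) rows cols have "- (2 powr a) = - zeta_regular s - (\<Sum>j. T j)" by simp
  thus ?thesis unfolding continuation_step_def a_def T_def by (simp add: algebra_simps)
qed

primrec zeta_regular_iter :: "nat \<Rightarrow> complex \<Rightarrow> complex" where
  "zeta_regular_iter 0 = zeta_regular"
| "zeta_regular_iter (Suc m) = continuation_step (zeta_regular_iter m)"

lemma continuation_step_cong:
  assumes "\<And>w. 1 < Re w \<Longrightarrow> g w = g' w" "0 < Re s"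
  shows "continuation_step g s = continuation_step g' s"
  unfolding continuation_step_def using assms by (simp add: add_pos_nonneg)

lemma zeta_regular_iter_continuation:
  "zeta_regular_iter m holomorphic_on halfplane m"
  "1 < Re s \<Longrightarrow> zeta_regular_iter m s = zeta_regular s"
proof -
  have "zeta_regular_iter m holomorphic_on halfplane m \<and>
        (\<forall>s. 1 < Re s \<longrightarrow> zeta_regular_iter m s = zeta_regular s)"
  proof (induction m)
    case 0
    show ?case using holomorphic_zeta_regular by simp
  next
    case (Suc m)
    have hol: "continuation_step (zeta_regular_iter m) holomorphic_on halfplane (Suc m)"
      by (rule holomorphic_continuation_step) (use Suc.IH in auto)
    have "continuation_step (zeta_regular_iter m) s = zeta_regular s" if s: "1 < Re s" for s
    proof (rule analytic_continuation_open[of "{s. 2 < Re s}" "halfplane 0"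
          "continuation_step (zeta_regular_iter m)" zeta_regular])
      show "continuation_step (zeta_regular_iter m) holomorphic_on halfplane 0"
        using holomorphic_on_subset[OF hol halfplane_mono] by simp
      show "continuation_step (zeta_regular_iter m) z = zeta_regular z" if "z \<in> {s. 2 < Re s}" for z
        using that continuation_step_cong[of "zeta_regular_iter m" zeta_regular z] Suc.IH
              continuation_step_zeta_regular[of z] by simp
      show "{s::complex. 2 < Re s} \<noteq> {}" by (intro ex_in_conv[THEN iffD1] exI[of _ 3]) simp
      show "{s::complex. 2 < Re s} \<subseteq> halfplane 0" by (auto simp: halfplane_def)
      show "zeta_regular holomorphic_on halfplane 0" by (rule holomorphic_zeta_regular)
    qed (use s in \<open>auto simp: halfplane_def open_halfspace_Re_gt open_halfplane connected_halfplane\<close>)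
    with hol show ?case by simp
  qed
  thus "zeta_regular_iter m holomorphic_on halfplane m"
    "1 < Re s \<Longrightarrow> zeta_regular_iter m s = zeta_regular s"
    by auto
qed

lemma zeta_regular_iter_mono_eq:
  assumes "m \<le> m'" "s \<in> halfplane m"
  shows "zeta_regular_iter m s = zeta_regular_iter m' s"
proof (rule analytic_continuation_open[of "halfplane 0" "halfplane m" "zeta_regular_iter m" "zeta_regular_iter m'"])
  show "zeta_regular_iter m' holomorphic_on halfplane m"
    using zeta_regular_iter_continuation(1)[of m'] halfplane_mono[OF assms(1)] holomorphic_on_subset by blast
  show "zeta_regular_iter m z = zeta_regular_iter m' z" if "z \<in> halfplane 0" for z
    using that zeta_regular_iter_continuation(2) by (simp add: halfplane_def)
  show "halfplane 0 \<noteq> {}" by (intro ex_in_conv[THEN iffD1] exI[of _ 2]) (simp add: halfplane_def)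
  show "halfplane 0 \<subseteq> halfplane m" by (rule halfplane_mono) simp
qed (use assms in \<open>simp_all add: open_halfplane connected_halfplane zeta_regular_iter_continuation(1)\<close>)

definition zeta_regular_entire :: "complex \<Rightarrow> complex" where
  "zeta_regular_entire s = zeta_regular_iter (Suc (nat \<lceil>1 - Re s\<rceil>)) s"

lemma mem_halfplane_ceiling: "s \<in> halfplane (Suc (nat \<lceil>1 - Re s\<rceil>))"
  unfolding halfplane_def by simp linarith

lemma zeta_regular_entire_eq_iter:
  assumes s: "s \<in> halfplane m"
  shows "zeta_regular_entire s = zeta_regular_iter m s"
proof (cases "Suc (nat \<lceil>1 - Re s\<rceil>) \<le> m")
  case True
  thus ?thesis unfolding zeta_regular_entire_def
    by (rule zeta_regular_iter_mono_eq) (rule mem_halfplane_ceiling)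
next
  case False
  hence "m \<le> Suc (nat \<lceil>1 - Re s\<rceil>)" by simp
  from zeta_regular_iter_mono_eq[OF this s] show ?thesis unfolding zeta_regular_entire_def by simp
qed

lemma holomorphic_zeta_regular_entire: "zeta_regular_entire holomorphic_on UNIV"
  unfolding holomorphic_on_def
proof
  fix x :: complex
  define m where "m = Suc (nat \<lceil>1 - Re x\<rceil>)"
  have "zeta_regular_entire holomorphic_on halfplane m"
    by (rule holomorphic_transform[of "zeta_regular_iter m"])
       (use zeta_regular_iter_continuation(1) zeta_regular_entire_eq_iter in auto)
  hence "zeta_regular_entire field_differentiable at x"
    using holomorphic_on_imp_differentiable_at open_halfplane mem_halfplane_ceiling m_def by blast
  thus "zeta_regular_entire field_differentiable at x within UNIV" by simp
qed

lemma riemann_zeta_spec_exists: "\<exists>f. f holomorphic_on (UNIV - {1}) \<and>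
    (\<forall>s. 1 < Re s \<longrightarrow> f s = (\<Sum>n. 1 / (of_nat (Suc n)) powr s))"
proof (intro exI conjI allI impI)
  show "(\<lambda>s. 1 + zeta_regular_entire s / (s - 1)) holomorphic_on (UNIV - {1})"
    by (intro holomorphic_intros holomorphic_on_subset[OF holomorphic_zeta_regular_entire]) auto
  fix s :: complex assume s: "1 < Re s"
  hence "s \<noteq> 1" by auto
  moreover have "zeta_regular_entire s = zeta_regular s"
    using zeta_regular_entire_eq_iter[of s 0] zeta_regular_iter_continuation(2)[OF s] s
    by (simp add: halfplane_def)
  ultimately show "1 + zeta_regular_entire s / (s - 1) = (\<Sum>n. 1 / (of_nat (Suc n)) powr s)"
    by (simp add: zeta_regular_def zeta_series_def)
qed

lemma holomorphic_riemann_zeta: "riemann_zeta holomorphic_on (UNIV - {1})"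
  using someI_ex[OF riemann_zeta_spec_exists] unfolding riemann_zeta_def[symmetric] by blast

lemma riemann_zeta_eq_zeta_series: "1 < Re s \<Longrightarrow> riemann_zeta s = zeta_series s"
  using someI_ex[OF riemann_zeta_spec_exists] unfolding riemann_zeta_def[symmetric]
  by (auto simp: zeta_series_def)

section \<open>The identity for Re s > 1\<close>

lemma sums_odd_terms:
  assumes "f sums c" "\<And>j. even j \<Longrightarrow> f j = 0"
  shows "(\<lambda>k. f (2*k+1)) sums c"
proof -
  have "strict_mono (\<lambda>k::nat. 2*k+1)" by (rule strict_monoI) simp
  moreover have "f j = 0" if "j \<notin> range (\<lambda>k::nat. 2*k+1)" for j
    using that assms(2)[of j] by (metis oddE rangeI)
  ultimately show ?thesis using sums_mono_reindex assms(1) by blast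
qed

lemma odd_binomial_sums:
  fixes s :: complex and x :: real
  assumes x: "0 \<le> x" "x < 1"
  shows "(\<lambda>k. pochhammer s (2*k+3) / fact (2*k+3) * of_real x ^ (2*k+3)) sums
           ((of_real (1 - x) powr (-s) - of_real (1 + x) powr (-s)) / 2 - s * of_real x)"
proof -
  define E where "E j = pochhammer s j / fact j * of_real x ^ j * ((1 - (-1)^j) / 2)" for j
  have "(\<lambda>j. ((-s) gchoose j) * (- of_real x)^j) sums (1 + (- of_real x)) powr (-s)"
       "(\<lambda>j. ((-s) gchoose j) * (of_real x)^j) sums (1 + of_real x) powr (-s)"
    by (rule gen_binomial_complex, use x in simp)+
  from sums_divide[OF sums_diff[OF this], of 2]
  have "(\<lambda>j. (((-s) gchoose j) * (- of_real x)^j - ((-s) gchoose j) * (of_real x)^j) / 2) sums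
          ((of_real (1 - x) powr (-s) - of_real (1 + x) powr (-s)) / 2)"
    by simp
  moreover have "(((-s) gchoose j) * (- of_real x)^j - ((-s) gchoose j) * (of_real x)^j) / 2 = E j" for j
  proof -
    have "(-1::complex)^j * (-1)^j = 1" by (simp flip: power_add)
    thus ?thesis unfolding E_def gbinomial_uminus power_minus[of "of_real x" j] by (simp add: field_simps)
  qed
  ultimately have "(\<lambda>k. E (2*k+1)) sums ((of_real (1 - x) powr (-s) - of_real (1 + x) powr (-s)) / 2)"
    by (intro sums_odd_terms) (auto simp: E_def)
  hence "(\<lambda>k. E (2 * Suc k + 1)) sums ((of_real (1 - x) powr (-s) - of_real (1 + x) powr (-s)) / 2 - E 1)"
    using sums_Suc_iff[of "\<lambda>k. E (2*k+1)"] by simp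
  moreover have "E (2 * Suc k + 1) = pochhammer s (2*k+3) / fact (2*k+3) * of_real x ^ (2*k+3)" for k
  proof -
    have "2 * Suc k + 1 = 2*k+3" "odd (2*k+3)" by simp_all
    thus ?thesis unfolding E_def by (simp only:) simp
  qed
  ultimately show ?thesis by (simp add: E_def)
qed

lemma odd_binomial_term_rescaled:
  fixes s :: complex and n :: nat
  defines "M \<equiv> (of_nat (Suc n) :: complex)"
  shows "2 * M * M powr (-s) * (pochhammer s (2*k+3) / fact (2*k+3) * of_real (1 / (2 * real (Suc n))) ^ (2*k+3))
       = (1/4)^(Suc k) * (1 / M powr (s + 2 * of_nat (Suc k))) * (pochhammer s (2*k+3) / fact (2*k+3))"
proof -
  have M0: "M \<noteq> 0" unfolding M_def by (simp del: of_nat_Suc)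
  have "M powr (s + 2 * of_nat (Suc k)) = M powr s * M powr (of_nat (2 * Suc k))"
    by (simp add: powr_add)
  hence e2: "1 / M powr (s + 2 * of_nat (Suc k)) = M powr (-s) / M ^ (2 * Suc k)"
    unfolding M_def powr_of_nat_Suc by (simp add: powr_minus divide_inverse)
  have X: "of_real (1 / (2 * real (Suc n))) = 1 / (2 * M)" by (simp add: M_def)
  have "(1 / (2*M)) ^ (2 * Suc k) = 1 / (2^(2*Suc k) * M^(2*Suc k))"
    by (simp only: power_divide power_one power_mult_distrib)
  also have "(2::complex)^(2 * Suc k) = 4^(Suc k)" by (simp only: power_mult) simp
  finally have "(1 / (2*M)) ^ (2 * Suc k) = (1/4)^(Suc k) / M^(2*Suc k)"
    by (simp only: power_one_over divide_divide_eq_left)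
  moreover have "(1 / (2*M)) ^ (2*k+3) = (1 / (2*M)) * (1 / (2*M)) ^ (2 * Suc k)"
  proof -
    have "2*k+3 = Suc (2 * Suc k)" by simp
    thus ?thesis by (simp only: power_Suc)
  qed
  ultimately have e3: "(1 / (2*M)) ^ (2*k+3) = 1 / (2 * M) * (1/4)^(Suc k) / M ^ (2 * Suc k)"
    by simp
  show ?thesis unfolding e2 X e3 using M0 by (simp add: field_simps)
qed

lemma odd_binomial_sum_rescaled:
  fixes s :: complex and n :: nat
  defines "M \<equiv> (of_nat (Suc n) :: complex)" and "x \<equiv> 1 / (2 * real (Suc n))"
  shows "2 * M * M powr (-s) * ((of_real (1 - x) powr (-s) - of_real (1 + x) powr (-s)) / 2 - s * of_real x)
     = M * (of_real (real n + 1/2) powr (-s) - of_real (real (Suc n) + 1/2) powr (-s)) - s * M powr (-s)"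
proof -
  have Mm: "M = of_real (real (Suc n))" by (simp add: M_def)
  have x: "0 \<le> x" "x < 1" by (auto simp: x_def field_simps)
  have "M powr (-s) * of_real (1 - x) powr (-s) = of_real (real (Suc n) * (1 - x)) powr (-s)"
    unfolding Mm of_real_mult by (rule powr_times_real[symmetric]) (use x in auto)
  also have "real (Suc n) * (1 - x) = real n + 1/2" by (simp add: x_def field_simps)
  finally have a: "M powr (-s) * of_real (1 - x) powr (-s) = of_real (real n + 1/2) powr (-s)" .
  have "M powr (-s) * of_real (1 + x) powr (-s) = of_real (real (Suc n) * (1 + x)) powr (-s)"
    unfolding Mm of_real_mult by (rule powr_times_real[symmetric]) (use x in auto)
  also have "real (Suc n) * (1 + x) = real (Suc n) + 1/2" by (simp add: x_def field_simps)
  finally have b: "M powr (-s) * of_real (1 + x) powr (-s) = of_real (real (Suc n) + 1/2) powr (-s)" .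
  have c: "2 * M * of_real x = 1" by (simp add: x_def Mm field_simps del: of_nat_Suc)
  have "2 * M * M powr (-s) * ((of_real (1 - x) powr (-s) - of_real (1 + x) powr (-s)) / 2 - s * of_real x)
      = M * (M powr (-s) * of_real (1 - x) powr (-s) - M powr (-s) * of_real (1 + x) powr (-s))
        - s * M powr (-s) * (2 * M * of_real x)"
    by (simp add: field_simps)
  thus ?thesis unfolding a b c by simp
qed

text \<open>Row n of the double series behind the identity: the odd part of the binomial expansions of
(n + 1 \<plusminus> 1/2)^(-s) around n + 1, without its linear term.\<close>

lemma zeta_row_sums:
  fixes s :: complex
  shows "(\<lambda>k. (1/4)^(Suc k) * (1 / (of_nat (Suc n)) powr (s + 2 * of_nat (Suc k))) *
              (pochhammer s (2*k+3) / fact (2*k+3))) sums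
         (of_nat (Suc n) * (of_real (real n + 1/2) powr (-s) - of_real (real (Suc n) + 1/2) powr (-s))
            - s * (of_nat (Suc n) powr (-s)))"
proof -
  define x where "x = 1 / (2 * real (Suc n))"
  have x: "0 \<le> x" "x < 1" by (auto simp: x_def field_simps)
  from sums_mult[OF odd_binomial_sums[OF x, of s], of "2 * of_nat (Suc n) * of_nat (Suc n) powr (-s)"]
  show ?thesis
    unfolding x_def odd_binomial_term_rescaled odd_binomial_sum_rescaled .
qed

lemma half_powr_uminus: "(of_real (1/2) :: complex) powr (-s) = 2 powr s"
proof -
  have "(of_real 2 * of_real (1/2) :: complex) powr s = of_real 2 powr s * of_real (1/2) powr s"
    by (rule powr_times_real) auto
  hence "1 = (2::complex) powr s * of_real (1/2) powr s" by simp
  hence "of_real (1/2) powr s = inverse ((2::complex) powr s)"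
    by (simp add: field_simps inverse_eq_divide)
  thus ?thesis by (simp add: powr_minus)
qed

lemma zeta_series_odd_sums:
  assumes s: "1 < Re s"
  shows "(\<lambda>n. (of_nat (2*n+1) :: complex) powr (-s)) sums (zeta_series s - 2 powr (-s) * zeta_series s)"
proof -
  define f where "f j = (of_nat (Suc j) :: complex) powr (-s)" for j
  have fs: "f sums zeta_series s" unfolding f_def by (rule zeta_series_sums'[OF s])
  from sums_group[OF fs, of 2] have g: "(\<lambda>n. f (2*n) + f (2*n+1)) sums zeta_series s"
    by (simp add: mult.commute numeral_2_eq_2)
  have e: "f (2*n+1) = 2 powr (-s) * f n" for n
  proof -
    have "(of_nat (Suc (2*n+1)) :: complex) = of_real 2 * of_real (real (Suc n))" by simp
    hence "f (2*n+1) = (of_real 2 * of_real (real (Suc n))) powr (-s)" by (simp add: f_def)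
    also have "\<dots> = of_real 2 powr (-s) * of_real (real (Suc n)) powr (-s)"
      by (rule powr_times_real) auto
    finally show ?thesis by (simp add: f_def)
  qed
  have o: "(\<lambda>n. f (2*n+1)) sums (2 powr (-s) * zeta_series s)"
    unfolding e by (rule sums_mult[OF fs])
  have "(\<lambda>n. (f (2*n) + f (2*n+1)) - f (2*n+1)) sums (zeta_series s - 2 powr (-s) * zeta_series s)"
    by (rule sums_diff[OF g o])
  thus ?thesis by (simp add: f_def)
qed

lemma half_integer_powr_sums:
  assumes s: "1 < Re s"
  shows "(\<lambda>n. (of_real (real n + 1/2) :: complex) powr (-s)) sums ((2 powr s - 1) * zeta_series s)"
proof -
  have e: "(of_real (real n + 1/2) :: complex) powr (-s) = 2 powr s * (of_nat (2*n+1) :: complex) powr (-s)" for n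
  proof -
    have eq: "(of_real (real n + 1/2) :: complex) = of_real (real (2*n+1)) * of_real (1/2)" by simp
    have "(of_real (real n + 1/2) :: complex) powr (-s) = (of_real (real (2*n+1)) * of_real (1/2)) powr (-s)"
      by (simp only: eq)
    also have "\<dots> = of_real (real (2*n+1)) powr (-s) * of_real (1/2) powr (-s)"
      by (rule powr_times_real) auto
    finally have "(of_real (real n + 1/2) :: complex) powr (-s) = of_real (real (2*n+1)) powr (-s) * of_real (1/2) powr (-s)" .
    thus ?thesis unfolding half_powr_uminus of_real_of_nat_eq by (simp only: mult.commute)
  qed
  have "(\<lambda>n. 2 powr s * (of_nat (2*n+1) :: complex) powr (-s)) sums (2 powr s * (zeta_series s - 2 powr (-s) * zeta_series s))"
    by (rule sums_mult[OF zeta_series_odd_sums[OF s]])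
  moreover have "(2::complex) powr s * (zeta_series s - 2 powr (-s) * zeta_series s) = (2 powr s - 1) * zeta_series s"
  proof -
    have "(2::complex) powr s * 2 powr (-s) = 1" by (simp add: powr_minus)
    thus ?thesis by (simp add: algebra_simps)
  qed
  ultimately show ?thesis unfolding e by simp
qed

lemma of_nat_mult_half_integer_powr_LIMSEQ_0:
  assumes s: "1 < Re s"
  shows "(\<lambda>N. of_nat N * (of_real (real N + 1/2) :: complex) powr (-s)) \<longlonglongrightarrow> 0"
proof (rule Lim_null_comparison)
  show "\<forall>\<^sub>F N in sequentially. norm (of_nat N * (of_real (real N + 1/2) :: complex) powr (-s)) \<le> (real N + 1/2) powr (1 - Re s)"
  proof (intro always_eventually allI)
    fix N :: nat
    have "norm (of_nat N * (of_real (real N + 1/2) :: complex) powr (-s)) = real N * (real N + 1/2) powr (- Re s)"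
      by (simp add: norm_mult norm_powr_real_powr)
    also have "\<dots> \<le> (real N + 1/2) * (real N + 1/2) powr (- Re s)"
      by (intro mult_right_mono) auto
    also have "\<dots> = (real N + 1/2) powr (1 - Re s)"
      by (simp add: powr_diff powr_minus_divide)
    finally show "norm (of_nat N * (of_real (real N + 1/2) :: complex) powr (-s)) \<le> (real N + 1/2) powr (1 - Re s)" .
  qed
  show "(\<lambda>N. (real N + 1/2) powr (1 - Re s)) \<longlonglongrightarrow> 0"
  proof (rule tendsto_neg_powr)
    show "1 - Re s < 0" using s by simp
    show "LIM N sequentially. real N + 1/2 :> at_top"
      using filterlim_tendsto_add_at_top[OF tendsto_const[of "1/2::real"] filterlim_real_sequentially]
      by (simp add: add.commute)
  qed
qed

lemma sum_lessThan_Suc_mult_diff: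
  fixes A :: "nat \<Rightarrow> complex"
  shows "(\<Sum>n<N. of_nat (Suc n) * (A n - A (Suc n))) = (\<Sum>n<N. A n) - of_nat N * A N"
  by (induction N) (simp_all add: algebra_simps)

lemma zeta_rows_sums:
  assumes s: "1 < Re s"
  shows "(\<lambda>n. of_nat (Suc n) * (of_real (real n + 1/2) powr (-s) - of_real (real (Suc n) + 1/2) powr (-s))
            - s * (of_nat (Suc n) powr (-s))) sums ((2 powr s - 1 - s) * zeta_series s)"
proof -
  define A where "A n = (of_real (real n + 1/2) :: complex) powr (-s)" for n
  have "(\<lambda>N. (\<Sum>n<N. A n) - of_nat N * A N) \<longlonglongrightarrow> (2 powr s - 1) * zeta_series s - 0"
    by (intro tendsto_diff) (use half_integer_powr_sums[OF s] of_nat_mult_half_integer_powr_LIMSEQ_0[OF s] in \<open>auto simp: sums_def A_def\<close>)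
  hence "(\<lambda>n. of_nat (Suc n) * (A n - A (Suc n))) sums ((2 powr s - 1) * zeta_series s)"
    unfolding sums_def sum_lessThan_Suc_mult_diff by simp
  from sums_diff[OF this sums_mult[OF zeta_series_sums'[OF s], of s]]
  show ?thesis by (simp add: A_def algebra_simps)
qed

lemma norm_zeta_row_term_le:
  "norm ((1/4)^(Suc k) * (1 / (of_nat (Suc n) :: complex) powr (s + 2 * of_nat (Suc k))) *
         (pochhammer s (2*k+3) / fact (2*k+3)))
   \<le> real (Suc n) powr (- Re s) * ((1/4::real)^(Suc k) * (pochhammer (norm s) (2*k+3) / fact (2*k+3)))"
proof -
  have "norm ((1/4)^(Suc k) * (1 / (of_nat (Suc n) :: complex) powr (s + 2 * of_nat (Suc k))) *
         (pochhammer s (2*k+3) / fact (2*k+3)))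
      = (1/4)^(Suc k) * norm (1 / (of_nat (Suc n) :: complex) powr (s + 2 * of_nat (Suc k))) *
        norm (pochhammer s (2*k+3) / fact (2*k+3))"
    unfolding norm_mult by (simp add: norm_power norm_divide)
  also have "\<dots> \<le> (1/4)^(Suc k) * real (Suc n) powr (- Re s) * (pochhammer (norm s) (2*k+3) / fact (2*k+3))"
  proof (intro mult_mono mult_left_mono norm_pochhammer_div_fact_le)
    show "norm (1 / (of_nat (Suc n) :: complex) powr (s + 2 * of_nat (Suc k))) \<le> real (Suc n) powr (- Re s)"
      unfolding norm_zeta_series_term by (intro powr_mono) auto
  qed auto
  finally show ?thesis by (simp add: mult_ac)
qed

lemma zeta_series_identity:
  assumes s: "1 < Re s"
  shows "(\<lambda>k. (1/4)^(Suc k) * zeta_series (s + 2 * of_nat (Suc k)) * (pochhammer s (2*k+3) / fact (2*k+3)))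
           sums ((2 powr s - 1 - s) * zeta_series s)"
proof -
  define a where "a n k = (1/4)^(Suc k) * (1 / (of_nat (Suc n) :: complex) powr (s + 2 * of_nat (Suc k))) *
       (pochhammer s (2*k+3) / fact (2*k+3))" for n k
  define u where "u n = real (Suc n) powr (- Re s)" for n
  define v where "v k = (1/4::real)^(Suc k) * (pochhammer (norm s) (2*k+3) / fact (2*k+3))" for k
  have u: "summable u" unfolding u_def by (rule summable_Suc_powr) (use s in simp)
  have v: "summable v" unfolding v_def by (rule summable_pochhammer_odd_series) simp
  have u0: "0 \<le> u n" for n by (simp add: u_def)
  have v0: "0 \<le> v k" for k by (simp add: v_def pochhammer_nonneg_of_nonneg)
  have bnd: "norm (a n k) \<le> u n * v k" for n k
    unfolding a_def u_def v_def by (rule norm_zeta_row_term_le)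
  note swap = suminf_swap_of_product_bound[of a u v, OF bnd u v u0 v0]
  define R where "R n = of_nat (Suc n) * (of_real (real n + 1/2) powr (-s) - of_real (real (Suc n) + 1/2) powr (-s))
            - s * (of_nat (Suc n) powr (-s))" for n
  have row: "(\<lambda>k. a n k) sums R n" for n unfolding a_def R_def by (rule zeta_row_sums)
  have col: "(\<lambda>n. a n k) sums ((1/4)^(Suc k) * zeta_series (s + 2 * of_nat (Suc k)) * (pochhammer s (2*k+3) / fact (2*k+3)))" for k
  proof -
    have "1 < Re (s + 2 * of_nat (Suc k))" using s by simp
    from sums_mult2[OF sums_mult[OF zeta_series_sums[OF this], of "(1/4)^(Suc k)"], of "pochhammer s (2*k+3) / fact (2*k+3)"]
    show ?thesis unfolding a_def .
  qed
  have "(\<Sum>n. \<Sum>k. a n k) = (\<Sum>n. R n)" using row by (simp add: sums_iff)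
  also have "\<dots> = (2 powr s - 1 - s) * zeta_series s" using zeta_rows_sums[OF s] unfolding R_def by (simp add: sums_iff)
  finally have tot: "(\<Sum>k. \<Sum>n. a n k) = (2 powr s - 1 - s) * zeta_series s" using swap(3) by simp
  have "(\<lambda>k. \<Sum>n. a n k) sums ((2 powr s - 1 - s) * zeta_series s)"
    using summable_sums[OF swap(2)] tot by simp
  moreover have "(\<Sum>n. a n k) = (1/4)^(Suc k) * zeta_series (s + 2 * of_nat (Suc k)) * (pochhammer s (2*k+3) / fact (2*k+3))" for k
    using col[of k] by (simp add: sums_iff)
  ultimately show ?thesis by simp
qed

section \<open>Analytic continuation of the identity\<close>

definition zeta_term :: "nat \<Rightarrow> complex \<Rightarrow> complex" where
  "zeta_term k s = (1/4)^(Suc k) * riemann_zeta (s + 2 * of_nat (Suc k)) * (pochhammer s (2*k+3) / fact (2*k+3))"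

definition zeta_domain :: "complex set" where "zeta_domain = UNIV - of_int ` {..1}"

lemma open_zeta_domain: "open zeta_domain"
  unfolding zeta_domain_def by (intro open_Diff closed_of_int_image) auto

lemma connected_zeta_domain: "connected zeta_domain"
  unfolding zeta_domain_def by (rule connected_open_diff_countable) (auto intro: countable_image)

lemma mem_zeta_domain: "s \<noteq> 1 \<Longrightarrow> s \<notin> \<int>\<^sub>\<le>\<^sub>0 \<Longrightarrow> s \<in> zeta_domain"
  unfolding zeta_domain_def
  by (auto simp: nonpos_Ints_of_int dest: le_imp_less_or_eq)

lemma add_even_ne_one_if_zeta_domain: "s \<in> zeta_domain \<Longrightarrow> s + 2 * of_nat (Suc k) \<noteq> 1"
proof
  assume s: "s \<in> zeta_domain" and "s + 2 * of_nat (Suc k) = 1"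
  hence "s = 1 - 2 * of_nat (Suc k)" by (metis add_diff_cancel_right')
  hence "s = of_int (- 2 * int k - 1)" by simp
  moreover have "- 2 * int k - 1 \<in> {..1}" by simp
  ultimately show False using s unfolding zeta_domain_def by blast
qed

lemma norm_riemann_zeta_le: "2 \<le> Re w \<Longrightarrow> norm (riemann_zeta w) \<le> 1 + zeta_tail_const"
proof -
  assume w: "2 \<le> Re w"
  have "norm (riemann_zeta w) \<le> norm (1::complex) + norm (zeta_series w - 1)"
    using norm_triangle_ineq[of 1 "zeta_series w - 1"] w by (simp add: riemann_zeta_eq_zeta_series)
  also have "norm (zeta_series w - 1) \<le> zeta_tail_const * 2 powr (- Re w)"
    by (rule norm_zeta_series_minus_one_le[OF w])
  also have "\<dots> \<le> zeta_tail_const * 2 powr 0"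
    using w by (intro mult_left_mono zeta_tail_const_nonneg powr_mono) auto
  finally show ?thesis by simp
qed

lemma norm_zeta_term_le:
  assumes "2 \<le> Re s + 2 * real (Suc k)" "norm s \<le> R"
  shows "norm (zeta_term k s) \<le> (1 + zeta_tail_const) * ((1/4)^(Suc k) * (pochhammer R (2*k+3) / fact (2*k+3)))"
proof -
  have "norm (zeta_term k s) = (1/4)^(Suc k) * norm (riemann_zeta (s + 2 * of_nat (Suc k)))
      * norm (pochhammer s (2*k+3) / fact (2*k+3))"
    unfolding zeta_term_def norm_mult by (simp add: norm_power norm_divide)
  also have "\<dots> \<le> (1/4)^(Suc k) * (1 + zeta_tail_const) * (pochhammer R (2*k+3) / fact (2*k+3))"
    using assms zeta_tail_const_nonneg order_trans[OF norm_ge_zero assms(2)]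
    by (intro mult_mono mult_left_mono norm_riemann_zeta_le norm_pochhammer_div_fact_le) auto
  finally show ?thesis by (simp add: mult_ac)
qed

lemma zeta_term_suminf_holomorphic:
  shows "(\<lambda>s. \<Sum>k. zeta_term k s) holomorphic_on zeta_domain"
    and "\<And>s. s \<in> zeta_domain \<Longrightarrow> summable (\<lambda>k. zeta_term k s)"
proof -
  have hol: "zeta_term k holomorphic_on zeta_domain" for k
  proof -
    have "(riemann_zeta \<circ> (\<lambda>s. s + 2 * of_nat (Suc k))) holomorphic_on zeta_domain"
      by (rule holomorphic_on_compose_gen[OF _ holomorphic_riemann_zeta])
         (auto intro!: holomorphic_intros dest: add_even_ne_one_if_zeta_domain)
    thus ?thesis unfolding zeta_term_def[abs_def] o_def by (intro holomorphic_intros) auto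
  qed
  have dom: "\<exists>d>0. cball z d \<subseteq> zeta_domain \<and>
      (\<exists>M. summable M \<and> (\<forall>\<^sub>F k in sequentially. \<forall>s\<in>cball z d. norm (zeta_term k s) \<le> M k))"
    if "z \<in> zeta_domain" for z
  proof -
    obtain d where d: "d > 0" "cball z d \<subseteq> zeta_domain"
      using open_contains_cball open_zeta_domain \<open>z \<in> zeta_domain\<close> by blast
    define R where "R = norm z + d"
    define M where "M k = (1 + zeta_tail_const) * ((1/4)^(Suc k) * (pochhammer R (2*k+3) / fact (2*k+3)))" for k
    have "summable M"
      unfolding M_def using d by (intro summable_mult summable_pochhammer_odd_series) (simp add: R_def)
    moreover have "\<forall>\<^sub>F k in sequentially. \<forall>s\<in>cball z d. norm (zeta_term k s) \<le> M k"
      unfolding eventually_sequentially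
    proof (intro exI allI impI ballI)
      fix k s assume k: "nat \<lceil>2 - (Re z - d)\<rceil> \<le> k" and s: "s \<in> cball z d"
      from cball_Re_norm_bounds[OF s] k have "2 \<le> Re s + 2 * real (Suc k)" "norm s \<le> R"
        by (auto simp: R_def)
      thus "norm (zeta_term k s) \<le> M k" unfolding M_def by (rule norm_zeta_term_le)
    qed
    ultimately show ?thesis using d by blast
  qed
  show "(\<lambda>s. \<Sum>k. zeta_term k s) holomorphic_on zeta_domain"
    and "\<And>s. s \<in> zeta_domain \<Longrightarrow> summable (\<lambda>k. zeta_term k s)"
    using holomorphic_suminf_locally_dominated[OF open_zeta_domain hol dom] by blast+
qed

lemma riemann_zeta_identity:
  assumes s: "s \<in> zeta_domain"
  shows "(2 powr s - 1 - s) * riemann_zeta s = (\<Sum>k. zeta_term k s)"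
proof (rule analytic_continuation_open[of "{s. 2 < Re s}" zeta_domain
      "\<lambda>s. (2 powr s - 1 - s) * riemann_zeta s" "\<lambda>s. \<Sum>k. zeta_term k s" s])
  show "{s::complex. 2 < Re s} \<noteq> {}" by (intro ex_in_conv[THEN iffD1] exI[of _ 3]) simp
  show "{s::complex. 2 < Re s} \<subseteq> zeta_domain" unfolding zeta_domain_def by auto
  have "zeta_domain \<subseteq> UNIV - {1}" unfolding zeta_domain_def by (auto intro: image_eqI[of 1 of_int 1])
  thus "(\<lambda>s. (2 powr s - 1 - s) * riemann_zeta s) holomorphic_on zeta_domain"
    by (intro holomorphic_intros holomorphic_on_subset[OF holomorphic_riemann_zeta]) auto
  show "(2 powr z - 1 - z) * riemann_zeta z = (\<Sum>k. zeta_term k z)" if "z \<in> {s. 2 < Re s}" for z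
  proof -
    have z: "1 < Re z" using that by simp
    have "zeta_term k z = (1/4)^(Suc k) * zeta_series (z + 2 * of_nat (Suc k)) * (pochhammer z (2*k+3) / fact (2*k+3))" for k
      unfolding zeta_term_def using z by (subst riemann_zeta_eq_zeta_series) auto
    with zeta_series_identity[OF z] riemann_zeta_eq_zeta_series[OF z] show ?thesis by (simp add: sums_iff)
  qed
qed (use s in \<open>simp_all add: open_halfspace_Re_gt open_zeta_domain connected_zeta_domain
                 zeta_term_suminf_holomorphic(1)\<close>)

lemma Gamma_series_term_eq_zeta_term:
  assumes "s \<notin> \<int>\<^sub>\<le>\<^sub>0"
  shows "(2::complex) powr (- 2 * of_nat (Suc k)) * riemann_zeta (s + 2 * of_nat (Suc k))
           * Gamma (1 + s + 2 * of_nat (Suc k)) / Gamma (2 * of_nat (Suc k) + 2) = Gamma s * zeta_term k s"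
proof -
  have "Gamma (1 + s + 2 * of_nat (Suc k)) = pochhammer s (2*k+3) * Gamma s"
    using pochhammer_Gamma[OF assms, of "2*k+3"] Gamma_eq_zero_iff[of s] assms
    by (simp add: field_simps add_ac)
  moreover have "Gamma (2 * of_nat (Suc k) + 2 :: complex) = fact (2*k+3)"
    using Gamma_fact[of "2*k+3"] by (simp add: add_ac)
  ultimately show ?thesis unfolding two_powr_minus_even zeta_term_def by (simp add: field_simps)
qed

theorem mainTheorem14:
  fixes s :: complex
  assumes "s \<noteq> 1"
    and "s \<notin> \<int>\<^sub>\<le>\<^sub>0"
    and "(2::complex) powr s - 1 - s \<noteq> 0"
    and "\<And>k::nat. k \<ge> 1 \<Longrightarrow> s + 2 * of_nat k \<noteq> 1 \<and> 1 + s + 2 * of_nat k \<notin> \<int>\<^sub>\<le>\<^sub>0"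
  shows "summable (\<lambda>k. (2::complex) powr (- 2 * of_nat (Suc k)) * riemann_zeta (s + 2 * of_nat (Suc k))
              * Gamma (1 + s + 2 * of_nat (Suc k)) / Gamma (2 * of_nat (Suc k) + 2))
         \<and> riemann_zeta s = 1 / (Gamma s * ((2::complex) powr s - 1 - s)) *
             (\<Sum>k. (2::complex) powr (- 2 * of_nat (Suc k)) * riemann_zeta (s + 2 * of_nat (Suc k))
              * Gamma (1 + s + 2 * of_nat (Suc k)) / Gamma (2 * of_nat (Suc k) + 2))"
proof -
  define c where "c = (2::complex) powr s - 1 - s"
  have s: "s \<in> zeta_domain" using assms(1,2) by (rule mem_zeta_domain)
  have summable: "summable (\<lambda>k. zeta_term k s)" by (rule zeta_term_suminf_holomorphic(2)[OF s])
  have "(\<Sum>k. Gamma s * zeta_term k s) = Gamma s * (c * riemann_zeta s)"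
    using suminf_mult[OF summable, of "Gamma s"] riemann_zeta_identity[OF s] by (simp add: c_def)
  moreover have "Gamma s \<noteq> 0" "c \<noteq> 0" using assms(2,3) by (simp_all add: Gamma_eq_zero_iff c_def)
  ultimately show ?thesis
    unfolding Gamma_series_term_eq_zeta_term[OF assms(2)] c_def[symmetric]
    using summable_mult[OF summable, of "Gamma s"] by (simp add: field_simps)
qed

end
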